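(* There exist a binary matrix $A$ and two binary column vectors $x,y$ such that $R_{binary}(A|x)=R_{binary}(A|y)=R_{binary}(A)$, but $R_{binary}(A|x,y)>R_{binary}(A)$.
   Context: For a binary $n\times m$ matrix $A$, $R_{binary}(A)$ is the least $k$ such that $A=UV$ with $U\in\{0,1\}^{n\times k}$, $V\in\{0,1\}^{k\times m}$, ordinary arithmetic. $(A|x_1,\dots,x_t)$ denotes $A$ with columns $x_1,\dots,x_t$ appended on the right. *)

theory Defs
  imports Main
begin

text \<open>An n x m matrix is represented as a function nat => nat => nat; only entries
  with row index < n and column index < m are relevant. A column vector of length n
  is a function nat => nat, only indices < n relevant.\<close>

definition binary_mat :: "nat \<Rightarrow> nat \<Rightarrow> (nat \<Rightarrow> nat \<Rightarrow> nat) \<Rightarrow> bool" where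
  "binary_mat n m A \<longleftrightarrow> (\<forall>i<n. \<forall>j<m. A i j \<in> {0, 1})"

definition binary_vec :: "nat \<Rightarrow> (nat \<Rightarrow> nat) \<Rightarrow> bool" where
  "binary_vec n x \<longleftrightarrow> (\<forall>i<n. x i \<in> {0, 1})"

text \<open>A = U V with U binary n x k, V binary k x m, ordinary (integer) arithmetic.\<close>
definition binary_factorizable :: "nat \<Rightarrow> nat \<Rightarrow> (nat \<Rightarrow> nat \<Rightarrow> nat) \<Rightarrow> nat \<Rightarrow> bool" where
  "binary_factorizable n m A k \<longleftrightarrow>
     (\<exists>U V. binary_mat n k U \<and> binary_mat k m V \<and>
        (\<forall>i<n. \<forall>j<m. A i j = (\<Sum>l<k. U i l * V l j)))"

definition R_binary :: "nat \<Rightarrow> nat \<Rightarrow> (nat \<Rightarrow> nat \<Rightarrow> nat) \<Rightarrow> nat" where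
  "R_binary n m A = (LEAST k. binary_factorizable n m A k)"

definition append_col :: "nat \<Rightarrow> (nat \<Rightarrow> nat \<Rightarrow> nat) \<Rightarrow> (nat \<Rightarrow> nat) \<Rightarrow> (nat \<Rightarrow> nat \<Rightarrow> nat)" where
  "append_col m A x = (\<lambda>i j. if j = m then x i else A i j)"

end

theory Submission
  imports Defs
begin

text \<open>Take A with rows 001, 011, 101, 111, x = (1,0,1,0) and y = (1,1,0,0).
  In a factorization A = UV every 1-entry of A lies in exactly one of the rank-one blocks
  (column l of U)(row l of V), and two 1-entries (i,j), (i',j') with A i j' = 0 or A i' j = 0
  cannot lie in the same block. The entries (0,2), (1,1), (2,0) are pairwise of this kind,
  so R(A) \<ge> 3, and explicit factorizations give R(A) = R(A|x) = R(A|y) = 3. In (A|x,y) the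
  four entries (0,3), (1,4), (2,0), (3,1) are pairwise of this kind, so R(A|x,y) \<ge> 4.\<close>

definition fooling_set :: "nat \<Rightarrow> nat \<Rightarrow> (nat \<Rightarrow> nat \<Rightarrow> nat) \<Rightarrow> (nat \<times> nat) set \<Rightarrow> bool" where
  "fooling_set n m M F \<longleftrightarrow>
     (\<forall>i j. (i, j) \<in> F \<longrightarrow> i < n \<and> j < m \<and> M i j = 1) \<and>
     (\<forall>i j i' j'. (i, j) \<in> F \<longrightarrow> (i', j') \<in> F \<longrightarrow> (i, j) \<noteq> (i', j') \<longrightarrow>
        M i j' = 0 \<or> M i' j = 0)"

lemma fooling_setD:
  assumes "fooling_set n m M F" "(i, j) \<in> F"
  shows "i < n" "j < m" "M i j = 1"
  using assms unfolding fooling_set_def by blast+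

lemma fooling_set_crossD:
  assumes "fooling_set n m M F" "(i, j) \<in> F" "(i', j') \<in> F" "(i, j) \<noteq> (i', j')"
  shows "M i j' = 0 \<or> M i' j = 0"
  using assms unfolding fooling_set_def by metis

lemma card_fooling_set_le:
  assumes fac: "binary_factorizable n m M k" and F: "fooling_set n m M F"
  shows "card F \<le> k"
proof -
  obtain U V where U: "binary_mat n k U" and V: "binary_mat k m V"
    and M: "\<And>i j. i < n \<Longrightarrow> j < m \<Longrightarrow> M i j = (\<Sum>l<k. U i l * V l j)"
    using fac unfolding binary_factorizable_def by blast
  have block: "1 \<le> M i j" if "i < n" "j < m" "l < k" "U i l = 1" "V l j = 1" for i j l
  proof -
    have "U i l * V l j \<le> (\<Sum>l<k. U i l * V l j)"
      by (rule member_le_sum) (use that in auto)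
    with that show ?thesis using M[OF that(1,2)] by simp
  qed
  have cover: "\<exists>l<k. U i l = 1 \<and> V l j = 1" if ij: "(i, j) \<in> F" for i j
  proof -
    have "(\<Sum>l<k. U i l * V l j) = 1"
      using M[OF fooling_setD(1,2)[OF F ij]] fooling_setD(3)[OF F ij] by simp
    then have "(\<Sum>l<k. U i l * V l j) \<noteq> 0" by simp
    then obtain l where l: "l \<in> {..<k}" "U i l * V l j \<noteq> 0"
      by (rule sum.not_neutral_contains_not_neutral)
    moreover have "U i l \<in> {0, 1}" "V l j \<in> {0, 1}"
      using U V fooling_setD(1,2)[OF F ij] l(1) unfolding binary_mat_def by auto
    ultimately show ?thesis by auto
  qed
  define block_of where
    "block_of p = (SOME l. l < k \<and> U (fst p) l = 1 \<and> V l (snd p) = 1)" for p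
  have block_of: "block_of (i, j) < k" "U i (block_of (i, j)) = 1" "V (block_of (i, j)) j = 1"
    if "(i, j) \<in> F" for i j
    using someI_ex[OF cover[OF that]] unfolding block_of_def by auto
  have "inj_on block_of F"
  proof (rule inj_onI, rule ccontr)
    fix p q assume "p \<in> F" "q \<in> F" "block_of p = block_of q" "p \<noteq> q"
    then obtain i j i' j' where p: "(i, j) \<in> F" and q: "(i', j') \<in> F" and ne: "(i, j) \<noteq> (i', j')"
      and same: "block_of (i, j) = block_of (i', j')"
      by (metis surj_pair)
    have "1 \<le> M i j'"
      using block[OF fooling_setD(1)[OF F p] fooling_setD(2)[OF F q] block_of(1,2)[OF p]]
        block_of(3)[OF q] same by simp
    moreover have "1 \<le> M i' j"
      using block[OF fooling_setD(1)[OF F q] fooling_setD(2)[OF F p] block_of(1,2)[OF q]]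
        block_of(3)[OF p] same by simp
    ultimately show False
      using fooling_set_crossD[OF F p q ne] by simp
  qed
  moreover have "block_of ` F \<subseteq> {..<k}"
    using block_of by auto
  ultimately show ?thesis
    by (metis card_image card_lessThan card_mono finite_lessThan)
qed

lemma fooling_set_append_col:
  assumes "fooling_set n m A F"
  shows "fooling_set n (Suc m) (append_col m A x) F"
  using assms unfolding fooling_set_def append_col_def by fastforce

lemma binary_mat_append_col:
  assumes "binary_mat n m A" "binary_vec n x"
  shows "binary_mat n (Suc m) (append_col m A x)"
  using assms unfolding binary_mat_def binary_vec_def append_col_def by (simp add: less_Suc_eq)

lemma binary_factorizable_rows:
  assumes "binary_mat n m M"
  shows "binary_factorizable n m M n"
  unfolding binary_factorizable_def
proof (intro exI conjI allI impI)
  show "binary_mat n n (\<lambda>i l. if i = l then 1 else 0)"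
    by (simp add: binary_mat_def)
  show "binary_mat n m M" by (fact assms)
  show "M i j = (\<Sum>l<n. (if i = l then 1 else 0) * M l j)" if "i < n" for i j
  proof -
    have "(\<Sum>l<n. (if i = l then 1 else 0) * M l j) = (\<Sum>l<n. if l = i then M l j else 0)"
      by (rule sum.cong) auto
    with that show ?thesis by simp
  qed
qed

lemma binary_factorizable_R_binary:
  assumes "binary_mat n m M"
  shows "binary_factorizable n m M (R_binary n m M)"
  unfolding R_binary_def using binary_factorizable_rows[OF assms] by (rule LeastI)

lemma card_fooling_set_le_R_binary:
  assumes "binary_mat n m M" "fooling_set n m M F"
  shows "card F \<le> R_binary n m M"
  using card_fooling_set_le binary_factorizable_R_binary assms by blast

lemma R_binary_eqI:
  assumes "binary_factorizable n m M (card F)" "fooling_set n m M F"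
  shows "R_binary n m M = card F"
  unfolding R_binary_def
  by (rule Least_equality) (use assms card_fooling_set_le in auto)

definition A\<^sub>0 :: "nat \<Rightarrow> nat \<Rightarrow> nat" where
  "A\<^sub>0 i j = [[0, 0, 1], [0, 1, 1], [1, 0, 1], [1, 1, 1]] ! i ! j"

definition x\<^sub>0 :: "nat \<Rightarrow> nat" where
  "x\<^sub>0 i = [1, 0, 1, 0] ! i"

definition y\<^sub>0 :: "nat \<Rightarrow> nat" where
  "y\<^sub>0 i = [1, 1, 0, 0] ! i"

lemmas example_simps = A\<^sub>0_def x\<^sub>0_def y\<^sub>0_def append_col_def binary_mat_def binary_vec_def
  fooling_set_def numeral_eq_Suc less_Suc_eq

lemma binary_example: "binary_mat 4 3 A\<^sub>0" "binary_vec 4 x\<^sub>0" "binary_vec 4 y\<^sub>0"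
  by (simp_all add: example_simps)

lemma fooling_set_example: "fooling_set 4 3 A\<^sub>0 {(0, 2), (1, 1), (2, 0)}"
  by (simp add: example_simps)

lemma fooling_set_example_xy:
  "fooling_set 4 5 (append_col 4 (append_col 3 A\<^sub>0 x\<^sub>0) y\<^sub>0) {(0, 3), (1, 4), (2, 0), (3, 1)}"
  by (simp add: example_simps)

lemma factorization_example: "binary_factorizable 4 3 A\<^sub>0 3"
  unfolding binary_factorizable_def
  by (rule exI[of _ "\<lambda>i l. [[1, 0, 0], [1, 1, 0], [0, 0, 1], [0, 1, 1]] ! i ! l"],
      rule exI[of _ "\<lambda>l j. [[0, 0, 1], [0, 1, 0], [1, 0, 1]] ! l ! j"])
     (simp add: example_simps)

lemma factorization_example_x: "binary_factorizable 4 4 (append_col 3 A\<^sub>0 x\<^sub>0) 3"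
  unfolding binary_factorizable_def
  by (rule exI[of _ "\<lambda>i l. [[1, 0, 0], [0, 1, 0], [1, 0, 1], [0, 1, 1]] ! i ! l"],
      rule exI[of _ "\<lambda>l j. [[0, 0, 1, 1], [0, 1, 1, 0], [1, 0, 0, 0]] ! l ! j"])
     (simp add: example_simps)

lemma factorization_example_y: "binary_factorizable 4 4 (append_col 3 A\<^sub>0 y\<^sub>0) 3"
  unfolding binary_factorizable_def
  by (rule exI[of _ "\<lambda>i l. [[1, 0, 0], [1, 1, 0], [0, 0, 1], [0, 1, 1]] ! i ! l"],
      rule exI[of _ "\<lambda>l j. [[0, 0, 1, 1], [0, 1, 0, 0], [1, 0, 1, 0]] ! l ! j"])
     (simp add: example_simps)

theorem mainTheorem7:
  shows "\<exists>n m A x y.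
     binary_mat n m A \<and> binary_vec n x \<and> binary_vec n y \<and>
     R_binary n (m + 1) (append_col m A x) = R_binary n m A \<and>
     R_binary n (m + 1) (append_col m A y) = R_binary n m A \<and>
     R_binary n (m + 2) (append_col (m + 1) (append_col m A x) y) > R_binary n m A"
proof (intro exI conjI)
  let ?F = "{(0, 2), (1, 1), (2, 0)} :: (nat \<times> nat) set"
  have card_F: "card ?F = 3" by simp
  note R_eq_3 = R_binary_eqI[where F = ?F, unfolded card_F]
  have F_x: "fooling_set 4 4 (append_col 3 A\<^sub>0 x\<^sub>0) ?F"
    using fooling_set_append_col[OF fooling_set_example] by simp
  have F_y: "fooling_set 4 4 (append_col 3 A\<^sub>0 y\<^sub>0) ?F"
    using fooling_set_append_col[OF fooling_set_example] by simp
  have R_A: "R_binary 4 3 A\<^sub>0 = 3"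
    by (rule R_eq_3[OF factorization_example fooling_set_example])
  show "binary_mat 4 3 A\<^sub>0" "binary_vec 4 x\<^sub>0" "binary_vec 4 y\<^sub>0"
    by (fact binary_example)+
  show "R_binary 4 (3 + 1) (append_col 3 A\<^sub>0 x\<^sub>0) = R_binary 4 3 A\<^sub>0"
    using R_eq_3[OF factorization_example_x F_x] R_A by simp
  show "R_binary 4 (3 + 1) (append_col 3 A\<^sub>0 y\<^sub>0) = R_binary 4 3 A\<^sub>0"
    using R_eq_3[OF factorization_example_y F_y] R_A by simp
  have "binary_mat 4 5 (append_col 4 (append_col 3 A\<^sub>0 x\<^sub>0) y\<^sub>0)"
    using binary_mat_append_col[OF binary_mat_append_col[OF binary_example(1,2)] binary_example(3)]
    by simp
  then have "4 \<le> R_binary 4 5 (append_col 4 (append_col 3 A\<^sub>0 x\<^sub>0) y\<^sub>0)"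
    using card_fooling_set_le_R_binary[OF _ fooling_set_example_xy] by simp
  then show "R_binary 4 (3 + 2) (append_col (3 + 1) (append_col 3 A\<^sub>0 x\<^sub>0) y\<^sub>0) > R_binary 4 3 A\<^sub>0"
    by (simp add: R_A)
qed

end
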